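(* Let $\beta_1>0$ and $\beta_2>0$ be constants. There exist constants $c,C>0$ and $n_0$, depending only on $\beta_1,\beta_2$, such that for every $n\ge n_0$ and every $(\beta_1,\beta_2)$-constrained triangle-free graph $\mathbb{P}$ on $[n]$ with average degree $d$, \[ c\,\frac{n^2\ln d}{d}\ \le\ \mathrm{ex}_{\mathbb{P}}(n,K_3)\ \le\ C\,\frac{n^2\ln d}{d}. \]
   Context: For a triangle-free graph $\mathbb{P}$ on $[n]$, $\mathrm{ex}_{\mathbb{P}}(n,K_3)$ denotes the maximum number of edges of a triangle-free graph $G$ on $[n]$ with $\mathbb{P}\subseteq G$ (as edge sets). For $\beta_1,\beta_2>0$, a graph $\mathbb{P}$ on $[n]$ with average degree $d(\mathbb{P})=2e(\mathbb{P})/n>1$ is $(\beta_1,\beta_2)$-constrained if $\alpha(\mathbb{P})\le \beta_1 n\ln d(\mathbb{P})/d(\mathbb{P})$ and $e(\mathbb{P})\Delta(\mathbb{P})\le (1/4-\beta_2)n^2$, where $\alpha$ is the independence number, $e$ the number of edges, and $\Delta$ the maximum degree. *)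

theory Defs
  imports Complex_Main
begin

definition graph_on :: "nat \<Rightarrow> nat set set \<Rightarrow> bool" where
  "graph_on n G \<longleftrightarrow> (\<forall>e\<in>G. e \<subseteq> {1..n} \<and> card e = 2)"

definition triangle_free :: "nat set set \<Rightarrow> bool" where
  "triangle_free G \<longleftrightarrow> \<not> (\<exists>a b c. {a, b} \<in> G \<and> {b, c} \<in> G \<and> {a, c} \<in> G)"

definition degree :: "nat set set \<Rightarrow> nat \<Rightarrow> nat" where
  "degree G v = card {u. {u, v} \<in> G}"

definition max_degree :: "nat \<Rightarrow> nat set set \<Rightarrow> nat" where
  "max_degree n G = Max (insert 0 (degree G ` {1..n}))"

definition independent_set :: "nat set set \<Rightarrow> nat set \<Rightarrow> bool" where
  "independent_set G S \<longleftrightarrow> (\<forall>u\<in>S. \<forall>v\<in>S. {u, v} \<notin> G)"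

definition indep_number :: "nat \<Rightarrow> nat set set \<Rightarrow> nat" where
  "indep_number n G = Max {card S | S. S \<subseteq> {1..n} \<and> independent_set G S}"

definition avg_degree :: "nat \<Rightarrow> nat set set \<Rightarrow> real" where
  "avg_degree n G = 2 * real (card G) / real n"

definition ex_P_K3 :: "nat \<Rightarrow> nat set set \<Rightarrow> nat" where
  "ex_P_K3 n P = Max {card G | G. graph_on n G \<and> triangle_free G \<and> P \<subseteq> G}"

definition constrained :: "real \<Rightarrow> real \<Rightarrow> nat \<Rightarrow> nat set set \<Rightarrow> bool" where
  "constrained \<beta>1 \<beta>2 n P \<longleftrightarrow>
     avg_degree n P > 1 \<and>
     real (indep_number n P) \<le> \<beta>1 * real n * ln (avg_degree n P) / avg_degree n P \<and>
     real (card P) * real (max_degree n P) \<le> (1/4 - \<beta>2) * (real n)^2"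

end

theory Submission
  imports Defs "HOL-Analysis.Harmonic_Numbers"
begin

text \<open>Upper bound: if \<open>G \<supseteq> P\<close> is triangle-free, the \<open>G\<close>-neighbourhood of every vertex is
  independent in \<open>P\<close>, so \<open>2 e(G) = \<Sum>\<^sub>v deg\<^sub>G v \<le> n \<alpha>(P)\<close>.

  Lower bound: split \<open>[n]\<close> into halves \<open>A\<close>, \<open>B\<close> and take the pairs \<open>(a, b) \<in> A \<times> B\<close> without a
  common \<open>P\<close>-neighbour as candidate edges. Two candidates conflict if they span a triangle with an
  edge of \<open>P\<close>; the conflict graph is triangle-free, and a conflict-free set of candidates can be added
  to \<open>P\<close>. Shearer's bound \<open>\<alpha>(H) \<ge> \<Sum>\<^sub>v f(deg v)\<close> for triangle-free \<open>H\<close> holds because deleting the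
  closed neighbourhood of a suitable vertex does not decrease \<open>1 + \<Sum>\<^sub>v f(deg v)\<close>: on average over
  the vertex the change is nonnegative. Since \<open>e(P) \<Delta>(P) \<le> n\<^sup>2/4\<close>, at most \<open>n\<^sup>2/8\<close> pairs of
  \<open>A \<times> B\<close> share a neighbour; the conflict degree of \<open>(a, b)\<close> is at most \<open>deg a + deg b\<close>, so by
  Markov's inequality \<open>n\<^sup>2/32\<close> candidates have conflict degree below \<open>32 d\<close>, and
  \<open>f(k) \<ge> ln k / (2k)\<close> yields \<open>ex\<^sub>P(n, K\<^sub>3) \<ge> n\<^sup>2 ln d / (2048 d)\<close>.\<close>

definition nbhd :: "'a set \<Rightarrow> ('a \<Rightarrow> 'a \<Rightarrow> bool) \<Rightarrow> 'a \<Rightarrow> 'a set" where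
  "nbhd V E v = {u \<in> V. E v u}"

definition deg :: "'a set \<Rightarrow> ('a \<Rightarrow> 'a \<Rightarrow> bool) \<Rightarrow> 'a \<Rightarrow> nat" where
  "deg V E v = card (nbhd V E v)"

definition codeg :: "'a set \<Rightarrow> ('a \<Rightarrow> 'a \<Rightarrow> bool) \<Rightarrow> 'a \<Rightarrow> 'a \<Rightarrow> nat" where
  "codeg V E v w = card (nbhd V E v \<inter> nbhd V E w)"

lemma nbhd_subset: "nbhd V E v \<subseteq> V"
  by (auto simp: nbhd_def)

lemma finite_nbhd: "finite V \<Longrightarrow> finite (nbhd V E v)"
  by (simp add: nbhd_def)

lemma codeg_le_deg: "finite V \<Longrightarrow> codeg V E v w \<le> deg V E w"
  unfolding codeg_def deg_def by (intro card_mono finite_nbhd) auto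

lemma codeg_self: "codeg V E v v = deg V E v"
  by (simp add: codeg_def deg_def)

locale sym_rel =
  fixes E :: "'a \<Rightarrow> 'a \<Rightarrow> bool"
  assumes sym: "E x y \<Longrightarrow> E y x"
begin

lemma sum_nbhd_swap:
  assumes "finite V"
  shows "(\<Sum>v\<in>V. \<Sum>u\<in>nbhd V E v. F v u) = (\<Sum>u\<in>V. \<Sum>v\<in>nbhd V E u. F v u)"
proof -
  have "(\<Sum>v\<in>V. \<Sum>u\<in>nbhd V E v. F v u) = (\<Sum>v\<in>V. \<Sum>u\<in>V. if E v u then F v u else 0)"
    unfolding nbhd_def using assms by (simp add: sum.inter_filter)
  also have "\<dots> = (\<Sum>u\<in>V. \<Sum>v\<in>V. if E u v then F v u else 0)"
    by (subst sum.swap) (auto intro!: sum.cong dest: sym)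
  also have "\<dots> = (\<Sum>u\<in>V. \<Sum>v\<in>nbhd V E u. F v u)"
    unfolding nbhd_def using assms by (simp add: sum.inter_filter)
  finally show ?thesis .
qed

lemma sum_sum_nbhd:
  "finite V \<Longrightarrow> (\<Sum>v\<in>V. \<Sum>u\<in>nbhd V E v. g u) = (\<Sum>u\<in>V. real (deg V E u) * g u)"
  by (simp add: sum_nbhd_swap[where F = "\<lambda>_ u. g u"] deg_def)

lemma sum_codeg:
  assumes "finite V"
  shows "(\<Sum>v\<in>V. real (codeg V E v w)) = (\<Sum>u\<in>nbhd V E w. real (deg V E u))"
proof -
  have "real (codeg V E v w) = (\<Sum>u\<in>nbhd V E v. of_bool (u \<in> nbhd V E w))" for v
    using assms by (simp add: codeg_def finite_nbhd sum.inter_filter[symmetric] Int_def)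
  then have "(\<Sum>v\<in>V. real (codeg V E v w)) = (\<Sum>u\<in>V. real (deg V E u) * of_bool (u \<in> nbhd V E w))"
    using assms by (simp add: sum_sum_nbhd)
  also have "\<dots> = (\<Sum>u\<in>nbhd V E w. real (deg V E u))"
    using assms nbhd_subset[of V E w] by (simp add: sum.inter_filter[symmetric] Int_absorb1 flip: Int_def)
  finally show ?thesis .
qed

lemma sum_codeg_mult:
  fixes h :: "'a \<Rightarrow> real"
  assumes "finite V"
  shows "(\<Sum>v\<in>V. \<Sum>w\<in>V. real (codeg V E v w) * h w)
    = (\<Sum>w\<in>V. \<Sum>u\<in>nbhd V E w. h w * (real (deg V E u) - real (deg V E w))) + (\<Sum>w\<in>V. real (deg V E w) ^ 2 * h w)"
proof -
  have nbhd_sum: "(\<Sum>u\<in>nbhd V E w. real (deg V E u)) * h w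
      = (\<Sum>u\<in>nbhd V E w. h w * (real (deg V E u) - real (deg V E w))) + real (deg V E w) ^ 2 * h w" for w
  proof -
    have "(\<Sum>u\<in>nbhd V E w. real (deg V E w)) = real (deg V E w) * real (deg V E w)"
      by (simp add: deg_def)
    then show ?thesis
      by (simp add: sum_distrib_left sum_subtractf power2_eq_square deg_def algebra_simps)
  qed
  have "(\<Sum>v\<in>V. \<Sum>w\<in>V. real (codeg V E v w) * h w) = (\<Sum>w\<in>V. (\<Sum>v\<in>V. real (codeg V E v w)) * h w)"
    by (subst sum.swap) (simp add: sum_distrib_right)
  then show ?thesis
    using assms by (simp add: sum_codeg nbhd_sum sum.distrib)
qed

lemma sum_nbhd_rearrangement_nonneg:
  fixes g x :: "'a \<Rightarrow> real"
  assumes "finite V"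
    and anti: "\<And>u w. u \<in> V \<Longrightarrow> w \<in> V \<Longrightarrow> E u w \<Longrightarrow> x u \<le> x w \<Longrightarrow> g w \<le> g u"
  shows "0 \<le> (\<Sum>w\<in>V. \<Sum>u\<in>nbhd V E w. g w * (x u - x w))"
proof -
  have "2 * (\<Sum>w\<in>V. \<Sum>u\<in>nbhd V E w. g w * (x u - x w))
      = (\<Sum>w\<in>V. \<Sum>u\<in>nbhd V E w. g w * (x u - x w)) + (\<Sum>u\<in>V. \<Sum>w\<in>nbhd V E u. g w * (x u - x w))"
    using sum_nbhd_swap[OF assms(1), of "\<lambda>w u. g w * (x u - x w)"] by simp
  also have "\<dots> = (\<Sum>w\<in>V. \<Sum>u\<in>nbhd V E w. (g w - g u) * (x u - x w))"
    by (simp only: sum.distrib[symmetric]) (simp add: algebra_simps)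
  also have "\<dots> \<ge> 0"
  proof (intro sum_nonneg)
    fix w u assume "w \<in> V" "u \<in> nbhd V E w"
    then have "u \<in> V" "E w u" "E u w" by (auto simp: nbhd_def dest: sym)
    then show "0 \<le> (g w - g u) * (x u - x w)"
      using anti[of w u] anti[of u w] \<open>w \<in> V\<close> by (cases "x w \<le> x u") (auto intro: mult_nonneg_nonneg mult_nonpos_nonpos)
  qed
  finally show ?thesis by simp
qed

lemma deg_remove_closed_nbhd:
  assumes "finite V" and w: "w \<in> V - insert v (nbhd V E v)"
  shows "deg (V - insert v (nbhd V E v)) E w = deg V E w - codeg V E v w"
proof -
  have "\<not> E w v" using w by (auto simp: nbhd_def dest: sym)
  then have "nbhd (V - insert v (nbhd V E v)) E w = nbhd V E w - nbhd V E v"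
    by (auto simp: nbhd_def)
  then show ?thesis
    using assms(1) by (simp add: deg_def codeg_def card_Diff_subset_Int finite_nbhd Int_commute)
qed

end

locale triangle_free_rel = sym_rel E for E :: "'a \<Rightarrow> 'a \<Rightarrow> bool" +
  assumes irrefl: "\<not> E x x"
    and no_triangle: "E x y \<Longrightarrow> E y z \<Longrightarrow> \<not> E x z"
begin

lemma codeg_nbhd:
  assumes "u \<in> nbhd V E v"
  shows "codeg V E v u = 0"
proof -
  have "nbhd V E v \<inter> nbhd V E u = {}"
    using assms by (auto simp: nbhd_def dest: sym no_triangle)
  then show ?thesis by (simp add: codeg_def)
qed

end

locale shearer_weight =
  fixes f :: "nat \<Rightarrow> real"
  assumes recurrence: "(real d + 1) * f d \<le> 1 + (real d ^ 2 - real d) * (f (d - 1) - f d)"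
    and decrement_antimono: "1 \<le> a \<Longrightarrow> a \<le> b \<Longrightarrow> f (b - 1) - f b \<le> f (a - 1) - f a"
begin

definition decr :: "nat \<Rightarrow> real" where
  "decr d = f (d - 1) - f d"

lemma add_mult_decr_le: "k \<le> d \<Longrightarrow> f d + real k * decr d \<le> f (d - k)"
proof (induction k)
  case 0
  then show ?case by simp
next
  case (Suc k)
  then have "decr d \<le> decr (d - k)"
    unfolding decr_def by (intro decrement_antimono) auto
  moreover have "f (d - k) + decr (d - k) = f (d - Suc k)"
    by (simp add: decr_def diff_diff_left)
  ultimately show ?case using Suc by (simp add: algebra_simps)
qed

end

locale shearer = triangle_free_rel E + shearer_weight f
  for E :: "'a \<Rightarrow> 'a \<Rightarrow> bool" and f :: "nat \<Rightarrow> real"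
begin

text \<open>Lower estimate for the change of \<open>1 + \<Sum>\<^sub>w f (deg w)\<close> when \<open>v\<close> and its neighbours are
  deleted: a vertex \<open>w\<close> at distance two loses \<open>codeg V E v w\<close> neighbours.\<close>

definition removal_estimate :: "'a set \<Rightarrow> 'a \<Rightarrow> real" where
  "removal_estimate V v = 1 - f (deg V E v) - (\<Sum>u\<in>nbhd V E v. f (deg V E u))
     + (\<Sum>w\<in>V. real (codeg V E v w) * decr (deg V E w)) - real (deg V E v) * decr (deg V E v)"

lemma removal_estimate_le:
  assumes "finite V" and v: "v \<in> V"
  defines "V' \<equiv> V - insert v (nbhd V E v)"
  shows "removal_estimate V v \<le> 1 + (\<Sum>w\<in>V'. f (deg V' E w)) - (\<Sum>w\<in>V. f (deg V E w))"
proof -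
  have split: "(\<Sum>w\<in>V. g w) = (\<Sum>w\<in>V'. g w) + g v + (\<Sum>w\<in>nbhd V E v. g w)" for g :: "'a \<Rightarrow> real"
  proof -
    have "v \<notin> nbhd V E v"
      by (simp add: nbhd_def irrefl)
    have "(\<Sum>w\<in>V'. g w) + (\<Sum>w\<in>insert v (nbhd V E v). g w) = (\<Sum>w\<in>V' \<union> insert v (nbhd V E v). g w)"
      using assms(1) by (intro sum.union_disjoint[symmetric]) (auto simp: V'_def finite_nbhd)
    also have "V' \<union> insert v (nbhd V E v) = V"
      using v nbhd_subset[of V E v] by (auto simp: V'_def)
    finally show ?thesis
      using \<open>v \<notin> nbhd V E v\<close> assms(1) by (simp add: finite_nbhd add.assoc)
  qed
  have "(\<Sum>w\<in>V'. f (deg V E w) + real (codeg V E v w) * decr (deg V E w)) \<le> (\<Sum>w\<in>V'. f (deg V' E w))"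
  proof (rule sum_mono)
    fix w assume "w \<in> V'"
    then show "f (deg V E w) + real (codeg V E v w) * decr (deg V E w) \<le> f (deg V' E w)"
      using assms(1) unfolding V'_def
      by (simp only: deg_remove_closed_nbhd add_mult_decr_le codeg_le_deg)
  qed
  moreover have "(\<Sum>w\<in>nbhd V E v. real (codeg V E v w) * decr (deg V E w)) = 0"
    by (simp add: codeg_nbhd)
  ultimately show ?thesis
    unfolding removal_estimate_def split[of "\<lambda>w. f (deg V E w)"]
      split[of "\<lambda>w. real (codeg V E v w) * decr (deg V E w)"]
    by (simp add: sum.distrib codeg_self)
qed

lemma sum_removal_estimate_nonneg:
  assumes "finite V"
  shows "0 \<le> (\<Sum>v\<in>V. removal_estimate V v)"
proof -
  let ?d = "\<lambda>v. real (deg V E v)" and ?h = "\<lambda>v. decr (deg V E v)"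
  let ?X = "\<Sum>w\<in>V. \<Sum>u\<in>nbhd V E w. ?h w * (?d u - ?d w)"
  have "(\<Sum>v\<in>V. removal_estimate V v) = (\<Sum>v\<in>V. 1 - f (deg V E v)) - (\<Sum>v\<in>V. \<Sum>u\<in>nbhd V E v. f (deg V E u))
      + (\<Sum>v\<in>V. \<Sum>w\<in>V. real (codeg V E v w) * ?h w) - (\<Sum>v\<in>V. ?d v * ?h v)"
    unfolding removal_estimate_def by (simp add: sum.distrib sum_subtractf)
  also have "\<dots> = (\<Sum>v\<in>V. 1 - (?d v + 1) * f (deg V E v) + (?d v ^ 2 - ?d v) * ?h v) + ?X"
    using assms by (simp add: sum_codeg_mult sum_sum_nbhd sum.distrib sum_subtractf algebra_simps)
  also have "\<dots> \<ge> 0"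
  proof (rule add_nonneg_nonneg)
    show "0 \<le> (\<Sum>v\<in>V. 1 - (?d v + 1) * f (deg V E v) + (?d v ^ 2 - ?d v) * ?h v)"
    proof (rule sum_nonneg)
      fix v
      show "0 \<le> 1 - (?d v + 1) * f (deg V E v) + (?d v ^ 2 - ?d v) * ?h v"
        using recurrence[of "deg V E v"] by (simp add: decr_def)
    qed
    show "0 \<le> (\<Sum>w\<in>V. \<Sum>u\<in>nbhd V E w. ?h w * (?d u - ?d w))"
    proof (rule sum_nbhd_rearrangement_nonneg[OF assms])
      fix u w assume "u \<in> V" "w \<in> V" "E u w" "?d u \<le> ?d w"
      then have "1 \<le> deg V E u" "deg V E u \<le> deg V E w"
        using assms by (auto simp: deg_def nbhd_def card_gt_0_iff Suc_le_eq)
      then show "?h w \<le> ?h u"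
        unfolding decr_def by (rule decrement_antimono)
    qed
  qed
  finally show ?thesis .
qed

lemma ex_removal_estimate_nonneg:
  assumes "finite V" and "V \<noteq> {}"
  shows "\<exists>v\<in>V. 0 \<le> removal_estimate V v"
proof (rule ccontr)
  assume "\<not> (\<exists>v\<in>V. 0 \<le> removal_estimate V v)"
  then have "(\<Sum>v\<in>V. removal_estimate V v) < (\<Sum>v\<in>V. 0)"
    using assms by (intro sum_strict_mono) auto
  then show False
    using sum_removal_estimate_nonneg[OF assms(1)] by simp
qed

theorem independent_set_ge_sum:
  assumes "finite V"
  shows "\<exists>S\<subseteq>V. (\<forall>x\<in>S. \<forall>y\<in>S. \<not> E x y) \<and> (\<Sum>v\<in>V. f (deg V E v)) \<le> real (card S)"
  using assms
proof (induction "card V" arbitrary: V rule: less_induct)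
  case less
  show ?case
  proof (cases "V = {}")
    case True
    then show ?thesis by auto
  next
    case False
    obtain v where v: "v \<in> V" and "0 \<le> removal_estimate V v"
      using ex_removal_estimate_nonneg[OF less.prems False] by blast
    define V' where "V' = V - insert v (nbhd V E v)"
    have "card V' < card V"
      unfolding V'_def using v less.prems by (intro psubset_card_mono) auto
    moreover have "finite V'"
      using less.prems by (simp add: V'_def)
    ultimately have "\<exists>S\<subseteq>V'. (\<forall>x\<in>S. \<forall>y\<in>S. \<not> E x y) \<and> (\<Sum>w\<in>V'. f (deg V' E w)) \<le> real (card S)"
      by (rule less.hyps)
    then obtain S' where S': "S' \<subseteq> V'" "\<forall>x\<in>S'. \<forall>y\<in>S'. \<not> E x y"
      "(\<Sum>w\<in>V'. f (deg V' E w)) \<le> real (card S')"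
      by blast
    have sub: "insert v S' \<subseteq> V" and "v \<notin> S'"
      using S'(1) v unfolding V'_def by blast+
    have "finite S'"
      using finite_subset[OF sub less.prems] by simp
    have "\<forall>x\<in>insert v S'. \<forall>y\<in>insert v S'. \<not> E x y"
      using S'(1,2) irrefl sym unfolding V'_def nbhd_def by blast
    moreover have "(\<Sum>w\<in>V. f (deg V E w)) \<le> real (card (insert v S'))"
      using removal_estimate_le[OF less.prems v] \<open>0 \<le> removal_estimate V v\<close> S'(3) \<open>v \<notin> S'\<close> \<open>finite S'\<close>
      by (simp add: V'_def)
    ultimately show ?thesis
      using sub by blast
  qed
qed

end

text \<open>A harmonic-number version of Shearer's weight \<open>(d ln d - d + 1) / (d - 1)\<^sup>2\<close>.\<close>

definition harm_weight :: "nat \<Rightarrow> real" where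
  "harm_weight d = (if d = 0 then 1 else harm d / (2 * real d))"

lemma harm_le_self: "harm n \<le> (real n :: real)"
proof (induction n)
  case 0
  then show ?case by (simp add: harm_def)
next
  case (Suc n)
  have "inverse (real (Suc n)) \<le> (1 :: real)"
    by (simp add: inverse_le_1_iff)
  then show ?case
    using Suc by (simp add: harm_Suc)
qed

lemma harm_ge_three_halves: "2 \<le> n \<Longrightarrow> 3 / 2 \<le> (harm n :: real)"
  using harm_mono[of 2 n] by (simp add: harm_def numeral_2_eq_2)

lemma harm_weight_decr:
  assumes d: "2 \<le> d"
  shows "harm_weight (d - 1) - harm_weight d = (harm d - 1) / (2 * real d * (real d - 1))"
proof -
  have "harm (d - 1) = harm d - 1 / (real d :: real)"
    using harm_Suc[of "d - 1", where 'a = real] d by (simp add: inverse_eq_divide)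
  moreover have "real (d - 1) = real d - 1"
    using d by simp
  ultimately have "harm_weight (d - 1) - harm_weight d
      = (harm d - 1 / real d) / (2 * (real d - 1)) - harm d / (2 * real d)"
    using d by (simp add: harm_weight_def)
  also have "\<dots> = (harm d - 1) / (2 * real d * (real d - 1))"
    using d by (simp add: field_simps)
  finally show ?thesis .
qed

lemma harm_weight_decr_1: "harm_weight 0 - harm_weight 1 = 1 / 2"
  by (simp add: harm_weight_def harm_def)

lemma harm_weight_decr_nonneg: "1 \<le> d \<Longrightarrow> 0 \<le> harm_weight (d - 1) - harm_weight d"
  using harm_weight_decr[of d] harm_weight_decr_1 harm_ge_three_halves[of d]
  by (cases "d = 1") simp_all

lemma harm_weight_decr_Suc_le:
  assumes "1 \<le> d"
  shows "harm_weight d - harm_weight (Suc d) \<le> harm_weight (d - 1) - harm_weight d"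
proof (cases "d = 1")
  case True
  then show ?thesis
    using harm_weight_decr[of 2] harm_weight_decr_1 by (simp add: harm_def numeral_2_eq_2)
next
  case False
  with assms have d: "2 \<le> d" by simp
  have "real d - 1 \<le> 1 * (real d + 1)"
    by simp
  also have "\<dots> \<le> 2 * (harm d - 1) * (real d + 1)"
    using harm_ge_three_halves[OF d] by (intro mult_right_mono) auto
  finally have "(real d - 1) / (real d + 1) \<le> 2 * (harm d - 1)"
    by (simp add: divide_le_eq)
  then have "(harm d + 1 / (real d + 1) - 1) / (2 * (real d + 1) * real d)
      \<le> (harm d - 1) / (2 * real d * (real d - 1))"
    using d by (simp add: divide_simps) (simp add: algebra_simps)
  then show ?thesis
    using harm_weight_decr[OF d] harm_weight_decr[of "Suc d"] d
    by (simp add: harm_Suc inverse_eq_divide add.commute)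
qed

interpretation harm_weight: shearer_weight harm_weight
proof
  fix d :: nat
  show "(real d + 1) * harm_weight d \<le> 1 + ((real d)\<^sup>2 - real d) * (harm_weight (d - 1) - harm_weight d)"
  proof (cases "d \<le> 1")
    case True
    then show ?thesis by (cases d) (simp_all add: harm_weight_def harm_def)
  next
    case False
    then have d: "2 \<le> d" by simp
    have "(real d + 1) * harm_weight d = (real d + 1) * harm d / (2 * real d)"
      using d by (simp add: harm_weight_def)
    also have "\<dots> \<le> 1 + (harm d - 1) / 2"
      using harm_le_self[of d] d by (simp add: field_simps)
    also have "\<dots> = 1 + ((real d)\<^sup>2 - real d) * ((harm d - 1) / (2 * real d * (real d - 1)))"
      using d by (simp add: field_simps power2_eq_square)
    also have "\<dots> = 1 + ((real d)\<^sup>2 - real d) * (harm_weight (d - 1) - harm_weight d)"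
      by (simp only: harm_weight_decr[OF d])
    finally show ?thesis .
  qed
next
  fix a b :: nat
  assume "1 \<le> a" and "a \<le> b"
  from \<open>a \<le> b\<close> show "harm_weight (b - 1) - harm_weight b \<le> harm_weight (a - 1) - harm_weight a"
  proof (induction b rule: dec_induct)
    case (step b)
    then show ?case
      using harm_weight_decr_Suc_le[of b] \<open>1 \<le> a\<close> by simp
  qed simp
qed

lemma harm_weight_antimono: "k \<le> m \<Longrightarrow> harm_weight m \<le> harm_weight k"
proof (induction m rule: dec_induct)
  case (step m)
  then show ?case using harm_weight_decr_nonneg[of "Suc m"] by simp
qed simp

lemma ln_div_le_harm_weight:
  assumes "1 \<le> m"
  shows "ln (real m) / (2 * real m) \<le> harm_weight m"
proof -
  have "ln (real m) \<le> ln (real m + 1)"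
    using assms by simp
  also have "\<dots> \<le> harm m"
    by (rule ln_le_harm)
  finally show ?thesis
    using assms by (simp add: harm_weight_def divide_right_mono)
qed

lemma harm_weight_ge_ln_div:
  assumes d: "1 < d" and k: "real k \<le> 32 * d"
  shows "ln d / (64 * d) \<le> harm_weight k"
proof -
  define m where "m = nat \<lfloor>32 * d\<rfloor>"
  have "0 \<le> \<lfloor>32 * d\<rfloor>"
    using d by simp
  then have m: "real m = real_of_int \<lfloor>32 * d\<rfloor>"
    by (simp add: m_def)
  have "32 * d < real_of_int \<lfloor>32 * d\<rfloor> + 1" "real_of_int \<lfloor>32 * d\<rfloor> \<le> 32 * d"
    by linarith+
  then have m_bounds: "d \<le> real m" "real m \<le> 32 * d"
    using d m by linarith+
  have "int k \<le> \<lfloor>32 * d\<rfloor>"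
    using k by (simp add: le_floor_iff)
  then have "k \<le> m"
    by (simp add: m_def)
  have "ln d / (64 * d) \<le> ln (real m) / (64 * d)"
    using m_bounds d by (intro divide_right_mono) auto
  also have "\<dots> \<le> ln (real m) / (2 * real m)"
    using m_bounds d by (intro divide_left_mono) auto
  also have "\<dots> \<le> harm_weight m"
    using m_bounds d by (intro ln_div_le_harm_weight) simp
  also have "\<dots> \<le> harm_weight k"
    using \<open>k \<le> m\<close> by (rule harm_weight_antimono)
  finally show ?thesis .
qed

lemma graph_on_finite: "graph_on n G \<Longrightarrow> finite G"
  unfolding graph_on_def by (meson PowI finite_Pow_iff finite_atLeastAtMost finite_subset subsetI)

lemma graph_on_edge_ne: "graph_on n G \<Longrightarrow> {a, b} \<in> G \<Longrightarrow> a \<noteq> b"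
  unfolding graph_on_def by fastforce

lemma graph_on_edge_mem: "graph_on n G \<Longrightarrow> {a, b} \<in> G \<Longrightarrow> a \<in> {1..n} \<and> b \<in> {1..n}"
  unfolding graph_on_def by (meson insert_subset)

lemma graph_on_nbrs_subset: "graph_on n G \<Longrightarrow> {u. {u, v} \<in> G} \<subseteq> {1..n}"
  using graph_on_edge_mem by blast

lemma finite_graph_on_nbrs: "graph_on n G \<Longrightarrow> finite {u. {u, v} \<in> G}"
  using finite_subset[OF graph_on_nbrs_subset] by blast

lemma degree_eq_card_incident:
  assumes "graph_on n G"
  shows "degree G v = card {e \<in> G. v \<in> e}"
proof -
  have image: "(\<lambda>u. {u, v}) ` {u. {u, v} \<in> G} = {e \<in> G. v \<in> e}"
  proof (intro subset_antisym subsetI)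
    fix e assume "e \<in> {e \<in> G. v \<in> e}"
    then have e: "e \<in> G" "v \<in> e" by simp_all
    then have "card e = 2"
      using assms by (simp add: graph_on_def)
    then obtain x y where "e = {x, y}"
      by (meson card_2_iff)
    with e(2) have "e = {y, v} \<or> e = {x, v}"
      by (auto simp: insert_commute)
    with e(1) show "e \<in> (\<lambda>u. {u, v}) ` {u. {u, v} \<in> G}"
      by auto
  qed blast
  have "inj_on (\<lambda>u. {u, v}) {u. {u, v} \<in> G}"
    by (auto simp: inj_on_def doubleton_eq_iff)
  then show ?thesis
    unfolding degree_def image[symmetric] by (simp add: card_image)
qed

lemma sum_degree_eq_twice_card:
  assumes G: "graph_on n G"
  shows "(\<Sum>v\<in>{1..n}. degree G v) = 2 * card G"
proof -
  have "degree G v = (\<Sum>e\<in>G. if v \<in> e then 1 else 0)" for v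
    unfolding degree_eq_card_incident[OF G] card_eq_sum
    using graph_on_finite[OF G] by (rule sum.inter_filter)
  then have "(\<Sum>v\<in>{1..n}. degree G v) = (\<Sum>v\<in>{1..n}. \<Sum>e\<in>G. if v \<in> e then 1 else 0)"
    by simp
  also have "\<dots> = (\<Sum>e\<in>G. \<Sum>v\<in>{1..n}. if v \<in> e then 1 else 0)"
    by (rule sum.swap)
  also have "\<dots> = (\<Sum>e\<in>G. 2)"
  proof (rule sum.cong)
    fix e assume "e \<in> G"
    then have "e \<subseteq> {1..n}" "card e = 2"
      using G by (auto simp: graph_on_def)
    then have "{v \<in> {1..n}. v \<in> e} = e"
      by auto
    then show "(\<Sum>v\<in>{1..n}. if v \<in> e then 1 else 0) = (2 :: nat)"
      using \<open>card e = 2\<close> by (subst sum.inter_filter[symmetric]) simp_all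
  qed simp
  finally show ?thesis by simp
qed

lemma degree_le_max_degree: "v \<in> {1..n} \<Longrightarrow> degree G v \<le> max_degree n G"
  unfolding max_degree_def by (intro Max_ge) auto

lemma card_le_indep_number:
  assumes "S \<subseteq> {1..n}" and "independent_set G S"
  shows "card S \<le> indep_number n G"
proof -
  have "{card S | S. S \<subseteq> {1..n} \<and> independent_set G S} \<subseteq> {..n}"
    using card_mono[of "{1..n}"] by auto
  then show ?thesis
    unfolding indep_number_def using assms by (intro Max_ge) (auto dest: finite_subset)
qed

lemma finite_ex_P_K3_set: "finite {card G | G. graph_on n G \<and> triangle_free G \<and> P \<subseteq> G}"
proof -
  have "{card G | G. graph_on n G \<and> triangle_free G \<and> P \<subseteq> G} \<subseteq> {..card (Pow {1..n})}"
    by (auto simp: graph_on_def intro!: card_mono)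
  then show ?thesis
    using finite_subset by blast
qed

lemma card_le_ex_P_K3:
  "graph_on n G \<Longrightarrow> triangle_free G \<Longrightarrow> P \<subseteq> G \<Longrightarrow> card G \<le> ex_P_K3 n P"
  unfolding ex_P_K3_def by (intro Max_ge[OF finite_ex_P_K3_set]) auto

lemma ex_P_K3_attained:
  assumes "graph_on n P" and "triangle_free P"
  obtains G where "graph_on n G" "triangle_free G" "P \<subseteq> G" "card G = ex_P_K3 n P"
proof -
  have "ex_P_K3 n P \<in> {card G | G. graph_on n G \<and> triangle_free G \<and> P \<subseteq> G}"
    unfolding ex_P_K3_def using assms by (intro Max_in[OF finite_ex_P_K3_set]) auto
  then show ?thesis
    using that by auto
qed

lemma twice_ex_P_K3_le:
  assumes P: "graph_on n P" "triangle_free P"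
  shows "2 * ex_P_K3 n P \<le> n * indep_number n P"
proof -
  obtain G where G: "graph_on n G" "triangle_free G" "P \<subseteq> G" "card G = ex_P_K3 n P"
    using ex_P_K3_attained[OF P] .
  have "degree G v \<le> indep_number n P" for v
  proof -
    have "independent_set P {u. {u, v} \<in> G}"
      using G(2,3) unfolding independent_set_def triangle_free_def by (auto simp: insert_commute)
    then show ?thesis
      unfolding degree_def using graph_on_nbrs_subset[OF G(1)] by (rule card_le_indep_number[rotated])
  qed
  then have "(\<Sum>v\<in>{1..n}. degree G v) \<le> n * indep_number n P"
    using sum_mono[of "{1..n}" "degree G" "\<lambda>_. indep_number n P"] by simp
  then show ?thesis
    using sum_degree_eq_twice_card[OF G(1)] G(4) by simp
qed

definition free_pairs :: "nat set set \<Rightarrow> nat set \<Rightarrow> nat set \<Rightarrow> (nat \<times> nat) set" where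
  "free_pairs P A B = {(a, b) \<in> A \<times> B. \<not> (\<exists>c. {a, c} \<in> P \<and> {b, c} \<in> P)}"

definition conflict :: "nat set set \<Rightarrow> nat \<times> nat \<Rightarrow> nat \<times> nat \<Rightarrow> bool" where
  "conflict P x y \<longleftrightarrow> (fst x = fst y \<and> {snd x, snd y} \<in> P) \<or> (snd x = snd y \<and> {fst x, fst y} \<in> P)"

lemma free_pairs_subset: "free_pairs P A B \<subseteq> A \<times> B"
  by (auto simp: free_pairs_def)

lemma triangle_freeD: "triangle_free G \<Longrightarrow> {a, b} \<in> G \<Longrightarrow> {b, c} \<in> G \<Longrightarrow> {a, c} \<notin> G"
  unfolding triangle_free_def by blast

lemma triangle_free_rel_conflict:
  assumes P: "graph_on n P" "triangle_free P"
  shows "triangle_free_rel (conflict P)"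
proof
  show "conflict P x y \<Longrightarrow> conflict P y x" for x y
    by (auto simp: conflict_def insert_commute)
  have "{a} \<notin> P" for a
    using graph_on_edge_ne[OF P(1), of a a] by auto
  then show "\<not> conflict P x x" for x
    by (simp add: conflict_def)
  show "\<not> conflict P x z" if "conflict P x y" "conflict P y z" for x y z
    using that graph_on_edge_ne[OF P(1)] triangle_freeD[OF P(2)]
    by (cases x; cases y; cases z) (auto simp: conflict_def insert_commute)
qed

lemma graph_on_add_pairs:
  assumes P: "graph_on n P"
    and AB: "A \<subseteq> {1..n}" "B \<subseteq> {1..n}" "A \<inter> B = {}" and S: "S \<subseteq> A \<times> B"
  shows "graph_on n (P \<union> (\<lambda>(a, b). {a, b}) ` S)"
  unfolding graph_on_def
proof
  fix e assume e: "e \<in> P \<union> (\<lambda>(a, b). {a, b}) ` S"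
  show "e \<subseteq> {1..n} \<and> card e = 2"
  proof (cases "e \<in> P")
    case True
    then show ?thesis using P by (simp add: graph_on_def)
  next
    case False
    then obtain a b where "(a, b) \<in> S" "e = {a, b}"
      using e by auto
    moreover from \<open>(a, b) \<in> S\<close> have "a \<in> {1..n}" "b \<in> {1..n}" "a \<noteq> b"
      using S AB by auto
    ultimately show ?thesis
      by auto
  qed
qed

lemma triangle_free_add_non_conflicting:
  assumes P: "triangle_free P" and AB: "A \<inter> B = {}"
    and S: "S \<subseteq> free_pairs P A B" "\<forall>x\<in>S. \<forall>y\<in>S. \<not> conflict P x y"
  shows "triangle_free (P \<union> (\<lambda>(a, b). {a, b}) ` S)"
proof -
  define G where "G = P \<union> (\<lambda>(a, b). {a, b}) ` S"
  have S_AB: "a \<in> A" "b \<in> B" if "(a, b) \<in> S" for a b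
    using that S(1) by (auto simp: free_pairs_def)
  have S_free: False if "(a, b) \<in> S" "{a, c} \<in> P" "{b, c} \<in> P" for a b c
    using that S(1) by (auto simp: free_pairs_def)
  have S_no_conflict: False if "(a, b) \<in> S" "(a, b') \<in> S" "{b, b'} \<in> P" for a b b'
    using S(2) that by (fastforce simp: conflict_def)
  have S_no_conflict': False if "(a, b) \<in> S" "(a', b) \<in> S" "{a, a'} \<in> P" for a a' b
    using S(2) that by (fastforce simp: conflict_def)
  have P_triangle: False if "{a, b} \<in> P" "{b, c} \<in> P" "{a, c} \<in> P" for a b c
    using that triangle_freeD[OF P] by blast
  have A_B: False if "a \<in> A" "a \<in> B" for a
    using that AB by blast
  have P_sym: "{b, a} \<in> P" if "{a, b} \<in> P" for a b
    using that by (simp add: insert_commute)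
  have G_edge: "{x, y} \<in> P \<or> (x, y) \<in> S \<or> (y, x) \<in> S" if "{x, y} \<in> G" for x y
    using that by (auto simp: G_def doubleton_eq_iff)
  have "\<not> (\<exists>x y z. {x, y} \<in> G \<and> {y, z} \<in> G \<and> {x, z} \<in> G)"
  proof
    assume "\<exists>x y z. {x, y} \<in> G \<and> {y, z} \<in> G \<and> {x, z} \<in> G"
    then obtain x y z where "{x, y} \<in> G" "{y, z} \<in> G" "{x, z} \<in> G"
      by blast
    then have "{x, y} \<in> P \<or> (x, y) \<in> S \<or> (y, x) \<in> S" "{y, z} \<in> P \<or> (y, z) \<in> S \<or> (z, y) \<in> S"
      "{x, z} \<in> P \<or> (x, z) \<in> S \<or> (z, x) \<in> S"
      by (simp_all add: G_edge)
    then show False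
      using P_sym by (elim disjE) (blast dest: S_free S_no_conflict S_no_conflict' S_AB A_B P_triangle)+
  qed
  then show ?thesis
    by (simp add: triangle_free_def G_def)
qed

lemma card_non_conflicting_le_ex_P_K3:
  assumes P: "graph_on n P" "triangle_free P"
    and AB: "A \<subseteq> {1..n}" "B \<subseteq> {1..n}" "A \<inter> B = {}"
    and S: "S \<subseteq> free_pairs P A B" "\<forall>x\<in>S. \<forall>y\<in>S. \<not> conflict P x y"
  shows "card S \<le> ex_P_K3 n P"
proof -
  let ?G = "P \<union> (\<lambda>(a, b). {a, b}) ` S"
  have "S \<subseteq> A \<times> B"
    using S(1) free_pairs_subset by blast
  then have G: "graph_on n ?G"
    by (rule graph_on_add_pairs[OF P(1) AB])
  have "inj_on (\<lambda>(a, b). {a, b :: nat}) S"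
    using \<open>S \<subseteq> A \<times> B\<close> AB(3) by (fastforce simp: inj_on_def doubleton_eq_iff)
  then have "card S = card ((\<lambda>(a, b). {a, b}) ` S)"
    by (simp add: card_image)
  also have "\<dots> \<le> card ?G"
    using graph_on_finite[OF G] by (intro card_mono) auto
  also have "\<dots> \<le> ex_P_K3 n P"
    using G triangle_free_add_non_conflicting[OF P(2) AB(3) S] by (intro card_le_ex_P_K3) auto
  finally show ?thesis .
qed

lemma sum_harm_weight_conflict_le_ex_P_K3:
  assumes P: "graph_on n P" "triangle_free P"
    and AB: "A \<subseteq> {1..n}" "B \<subseteq> {1..n}" "A \<inter> B = {}"
  shows "(\<Sum>x\<in>free_pairs P A B. harm_weight (deg (free_pairs P A B) (conflict P) x)) \<le> real (ex_P_K3 n P)"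
proof -
  interpret shearer "conflict P" harm_weight
    using triangle_free_rel_conflict[OF P] harm_weight.shearer_weight_axioms by (simp add: shearer_def)
  have "finite A" "finite B"
    using finite_subset[OF AB(1)] finite_subset[OF AB(2)] by simp_all
  moreover have "free_pairs P A B \<subseteq> A \<times> B"
    by (rule free_pairs_subset)
  ultimately have "finite (free_pairs P A B)"
    using finite_subset by blast
  from independent_set_ge_sum[OF this] obtain S where S: "S \<subseteq> free_pairs P A B" "\<forall>x\<in>S. \<forall>y\<in>S. \<not> conflict P x y"
    and "(\<Sum>x\<in>free_pairs P A B. harm_weight (deg (free_pairs P A B) (conflict P) x)) \<le> real (card S)"
    by blast
  with card_non_conflicting_le_ex_P_K3[OF P AB S] show ?thesis
    by linarith
qed

lemma card_mult_le_sum: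
  fixes s :: "'a \<Rightarrow> real"
  assumes "finite X" and "\<And>x. x \<in> X \<Longrightarrow> 0 \<le> s x"
  shows "t * real (card {x \<in> X. t \<le> s x}) \<le> (\<Sum>x\<in>X. s x)"
proof -
  have "t * real (card {x \<in> X. t \<le> s x}) = (\<Sum>x\<in>{x \<in> X. t \<le> s x}. t)"
    by simp
  also have "\<dots> \<le> (\<Sum>x\<in>{x \<in> X. t \<le> s x}. s x)"
    by (rule sum_mono) simp
  also have "\<dots> \<le> (\<Sum>x\<in>X. s x)"
    using assms by (intro sum_mono2) auto
  finally show ?thesis .
qed

lemma four_mult_card_nbrs_le:
  assumes P: "graph_on n P" and AB: "A \<inter> B = {}" and c: "c \<in> {1..n}"
  shows "4 * (real (card {a \<in> A. {a, c} \<in> P}) * real (card {b \<in> B. {b, c} \<in> P}))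
    \<le> real (max_degree n P) * real (degree P c)"
proof -
  define x where "x = real (card {a \<in> A. {a, c} \<in> P})"
  define y where "y = real (card {b \<in> B. {b, c} \<in> P})"
  have "card {a \<in> A. {a, c} \<in> P} + card {b \<in> B. {b, c} \<in> P} = card ({a \<in> A. {a, c} \<in> P} \<union> {b \<in> B. {b, c} \<in> P})"
    using AB finite_subset[OF _ finite_graph_on_nbrs[OF P, of c]] by (intro card_Un_disjoint[symmetric]) auto
  also have "\<dots> \<le> degree P c"
    unfolding degree_def using finite_graph_on_nbrs[OF P] by (intro card_mono) auto
  finally have "x + y \<le> real (degree P c)"
    unfolding x_def y_def by linarith
  have "4 * (x * y) \<le> (x + y)\<^sup>2"
    using sum_squares_ge_zero[of "x - y" 0] by (simp add: power2_eq_square algebra_simps)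
  also have "\<dots> \<le> real (degree P c) * real (degree P c)"
    using \<open>x + y \<le> real (degree P c)\<close> by (simp add: x_def y_def power2_eq_square mult_mono)
  also have "\<dots> \<le> real (max_degree n P) * real (degree P c)"
    using degree_le_max_degree[OF c] by (intro mult_right_mono) auto
  finally show ?thesis
    unfolding x_def y_def .
qed

lemma card_common_nbr_pairs_le:
  assumes P: "graph_on n P"
    and AB: "A \<subseteq> {1..n}" "B \<subseteq> {1..n}" "A \<inter> B = {}"
  shows "4 * real (card (A \<times> B - free_pairs P A B)) \<le> 2 * real (max_degree n P) * real (card P)"
proof -
  define NA where "NA c = {a \<in> A. {a, c} \<in> P}" for c
  define NB where "NB c = {b \<in> B. {b, c} \<in> P}" for c
  have fin: "finite (NA c)" "finite (NB c)" for c
    using finite_subset[OF AB(1)] finite_subset[OF AB(2)] by (simp_all add: NA_def NB_def)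
  have "A \<times> B - free_pairs P A B \<subseteq> (\<Union>c\<in>{1..n}. NA c \<times> NB c)"
    using graph_on_edge_mem[OF P] by (fastforce simp: free_pairs_def NA_def NB_def insert_commute)
  then have "card (A \<times> B - free_pairs P A B) \<le> card (\<Union>c\<in>{1..n}. NA c \<times> NB c)"
    using fin by (intro card_mono) auto
  also have "\<dots> \<le> (\<Sum>c\<in>{1..n}. card (NA c \<times> NB c))"
    by (rule card_UN_le) simp
  finally have "real (card (A \<times> B - free_pairs P A B)) \<le> (\<Sum>c\<in>{1..n}. real (card (NA c)) * real (card (NB c)))"
    by (simp add: card_cartesian_product flip: of_nat_mult of_nat_sum)
  then have "4 * real (card (A \<times> B - free_pairs P A B)) \<le> (\<Sum>c\<in>{1..n}. 4 * (real (card (NA c)) * real (card (NB c))))"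
    by (simp add: sum_distrib_left[symmetric])
  also have "\<dots> \<le> (\<Sum>c\<in>{1..n}. real (max_degree n P) * real (degree P c))"
    unfolding NA_def NB_def using four_mult_card_nbrs_le[OF P AB(3)] by (rule sum_mono)
  also have "\<dots> = 2 * real (max_degree n P) * real (card P)"
    using sum_degree_eq_twice_card[OF P]
    by (simp add: sum_distrib_left[symmetric] flip: of_nat_sum)
  finally show ?thesis .
qed

lemma card_halves_product: "(real n)\<^sup>2 - 1 \<le> 4 * (real (n div 2) * real (n - n div 2))"
proof -
  define q where "q = n div 2"
  have "n = 2 * q \<or> n = 2 * q + 1"
    by (auto simp: q_def)
  then show ?thesis
    unfolding q_def[symmetric] by (elim disjE) (simp_all add: power2_eq_square algebra_simps)
qed

lemma card_free_pairs_halves_ge: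
  assumes P: "graph_on n P" and n: "2 \<le> n"
    and sparse: "real (card P) * real (max_degree n P) \<le> (real n)\<^sup>2 / 4"
  shows "(real n)\<^sup>2 / 16 \<le> real (card (free_pairs P {1..n div 2} {n div 2 + 1..n}))"
proof -
  define A where "A = {1..n div 2}"
  define B where "B = {n div 2 + 1..n}"
  have AB: "A \<subseteq> {1..n}" "B \<subseteq> {1..n}" "A \<inter> B = {}"
    by (auto simp: A_def B_def)
  have "free_pairs P A B \<subseteq> A \<times> B"
    by (rule free_pairs_subset)
  moreover have "finite (A \<times> B)"
    by (simp add: A_def B_def)
  ultimately have "card (A \<times> B) = card (free_pairs P A B) + card (A \<times> B - free_pairs P A B)"
    by (metis card_Diff_subset card_mono finite_subset le_add_diff_inverse)
  moreover have "card (A \<times> B) = n div 2 * (n - n div 2)"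
    by (simp add: A_def B_def card_cartesian_product)
  ultimately have "real (n div 2) * real (n - n div 2)
      = real (card (free_pairs P A B)) + real (card (A \<times> B - free_pairs P A B))"
    by (metis of_nat_add of_nat_mult)
  moreover have "4 * real (card (A \<times> B - free_pairs P A B)) \<le> (real n)\<^sup>2 / 2"
    using card_common_nbr_pairs_le[OF P AB] sparse by (simp add: mult.commute)
  moreover have "4 \<le> (real n)\<^sup>2"
    using power_mono[of 2 "real n" 2] n by simp
  ultimately show ?thesis
    using card_halves_product[of n] unfolding A_def B_def by linarith
qed

lemma deg_conflict_le:
  assumes P: "graph_on n P"
  shows "deg X (conflict P) (a, b) \<le> degree P a + degree P b"
proof -
  have "nbhd X (conflict P) (a, b) \<subseteq> Pair a ` {u. {u, b} \<in> P} \<union> (\<lambda>u. (u, b)) ` {u. {u, a} \<in> P}"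
    by (auto simp: nbhd_def conflict_def insert_commute)
  then have "deg X (conflict P) (a, b) \<le> card (Pair a ` {u. {u, b} \<in> P} \<union> (\<lambda>u. (u, b)) ` {u. {u, a} \<in> P})"
    unfolding deg_def using finite_graph_on_nbrs[OF P] by (intro card_mono) auto
  also have "\<dots> \<le> card (Pair a ` {u. {u, b} \<in> P}) + card ((\<lambda>u. (u, b)) ` {u. {u, a} \<in> P})"
    by (rule card_Un_le)
  also have "\<dots> \<le> degree P b + degree P a"
    unfolding degree_def by (intro add_mono card_image_le finite_graph_on_nbrs[OF P])
  finally show ?thesis
    by simp
qed

lemma sum_pair_degrees_le:
  assumes P: "graph_on n P"
    and AB: "A \<subseteq> {1..n}" "B \<subseteq> {1..n}" "A \<inter> B = {}" and S: "S \<subseteq> A \<times> B"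
  shows "(\<Sum>(a, b)\<in>S. degree P a + degree P b) \<le> n * (2 * card P)"
proof -
  have "finite A" "finite B"
    using finite_subset[OF AB(1)] finite_subset[OF AB(2)] by simp_all
  then have "(\<Sum>(a, b)\<in>S. degree P a + degree P b) \<le> (\<Sum>(a, b)\<in>A \<times> B. degree P a + degree P b)"
    using S by (intro sum_mono2) auto
  also have "\<dots> = card B * (\<Sum>a\<in>A. degree P a) + card A * (\<Sum>b\<in>B. degree P b)"
    by (simp add: sum.cartesian_product[symmetric] sum.distrib sum_distrib_left mult.commute)
  also have "\<dots> \<le> n * (\<Sum>a\<in>A. degree P a) + n * (\<Sum>b\<in>B. degree P b)"
    using card_mono[OF _ AB(1)] card_mono[OF _ AB(2)] by (intro add_mono mult_right_mono) auto
  also have "\<dots> = n * (\<Sum>v\<in>A \<union> B. degree P v)"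
    using AB \<open>finite A\<close> \<open>finite B\<close> by (simp add: sum.union_disjoint distrib_left)
  also have "\<dots> \<le> n * (\<Sum>v\<in>{1..n}. degree P v)"
    using AB by (intro mult_left_mono sum_mono2) auto
  finally show ?thesis
    using sum_degree_eq_twice_card[OF P] by simp
qed

lemma card_low_degree_free_pairs_ge:
  assumes P: "graph_on n P" and n: "2 \<le> n" and d: "1 < avg_degree n P"
    and sparse: "real (card P) * real (max_degree n P) \<le> (real n)\<^sup>2 / 4"
  shows "(real n)\<^sup>2 / 32 \<le> real (card {x \<in> free_pairs P {1..n div 2} {n div 2 + 1..n}.
           real (degree P (fst x) + degree P (snd x)) < 32 * avg_degree n P})"
proof -
  define A where "A = {1..n div 2}"
  define B where "B = {n div 2 + 1..n}"
  define E0 where "E0 = free_pairs P A B"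
  define s where "s x = real (degree P (fst x) + degree P (snd x))" for x
  define t where "t = 32 * avg_degree n P"
  have AB: "A \<subseteq> {1..n}" "B \<subseteq> {1..n}" "A \<inter> B = {}"
    by (auto simp: A_def B_def)
  have "E0 \<subseteq> A \<times> B"
    unfolding E0_def by (rule free_pairs_subset)
  then have "finite E0"
    by (rule finite_subset) (simp add: A_def B_def)
  have "(\<Sum>x\<in>E0. s x) = real (\<Sum>(a, b)\<in>E0. degree P a + degree P b)"
    by (simp add: s_def case_prod_beta)
  also have "\<dots> \<le> real (n * (2 * card P))"
    using sum_pair_degrees_le[OF P AB \<open>E0 \<subseteq> A \<times> B\<close>] by (simp only: of_nat_le_iff)
  also have "\<dots> = (real n)\<^sup>2 * t / 32"
    using n by (simp add: t_def avg_degree_def power2_eq_square)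
  finally have "t * real (card {x \<in> E0. t \<le> s x}) \<le> (real n)\<^sup>2 * t / 32"
    using card_mult_le_sum[OF \<open>finite E0\<close>, of s t] by (simp add: s_def)
  then have "real (card {x \<in> E0. t \<le> s x}) \<le> (real n)\<^sup>2 / 32"
    using d by (simp add: t_def field_simps)
  moreover have "real (card E0) = real (card {x \<in> E0. s x < t}) + real (card {x \<in> E0. t \<le> s x})"
  proof -
    have "{x \<in> E0. s x < t} \<union> {x \<in> E0. t \<le> s x} = E0"
      by auto
    moreover have "card ({x \<in> E0. s x < t} \<union> {x \<in> E0. t \<le> s x}) = card {x \<in> E0. s x < t} + card {x \<in> E0. t \<le> s x}"
      using \<open>finite E0\<close> by (intro card_Un_disjoint) auto
    ultimately show ?thesis
      by simp
  qed
  moreover have "(real n)\<^sup>2 / 16 \<le> real (card E0)"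
    using card_free_pairs_halves_ge[OF P n sparse] by (simp add: E0_def A_def B_def)
  ultimately show ?thesis
    unfolding E0_def A_def B_def s_def t_def by linarith
qed

lemma ex_P_K3_lower_bound:
  assumes P: "graph_on n P" "triangle_free P" and n: "2 \<le> n"
    and d: "1 < avg_degree n P"
    and sparse: "real (card P) * real (max_degree n P) \<le> (real n)\<^sup>2 / 4"
  shows "(real n)\<^sup>2 * ln (avg_degree n P) / (2048 * avg_degree n P) \<le> real (ex_P_K3 n P)"
proof -
  define d where "d = avg_degree n P"
  define E0 where "E0 = free_pairs P {1..n div 2} {n div 2 + 1..n}"
  define L where "L = {x \<in> E0. real (degree P (fst x) + degree P (snd x)) < 32 * d}"
  have AB: "{1..n div 2} \<subseteq> {1..n}" "{n div 2 + 1..n} \<subseteq> {1..n}" "{1..n div 2} \<inter> {n div 2 + 1..n} = {}"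
    by auto
  have "E0 \<subseteq> {1..n div 2} \<times> {n div 2 + 1..n}"
    unfolding E0_def by (rule free_pairs_subset)
  then have "finite E0"
    by (rule finite_subset) simp
  have "ln d / (64 * d) \<le> harm_weight (deg E0 (conflict P) x)" if "x \<in> L" for x
  proof (rule harm_weight_ge_ln_div)
    show "1 < d"
      using d by (simp add: d_def)
    have "deg E0 (conflict P) x \<le> degree P (fst x) + degree P (snd x)"
      using deg_conflict_le[OF P(1), of E0 "fst x" "snd x"] by simp
    then show "real (deg E0 (conflict P) x) \<le> 32 * d"
      using that by (auto simp: L_def)
  qed
  then have "real (card L) * (ln d / (64 * d)) \<le> (\<Sum>x\<in>L. harm_weight (deg E0 (conflict P) x))"
    using sum_mono[of L "\<lambda>_. ln d / (64 * d)"] by simp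
  also have "\<dots> \<le> (\<Sum>x\<in>E0. harm_weight (deg E0 (conflict P) x))"
    using \<open>finite E0\<close> by (intro sum_mono2) (auto simp: L_def harm_weight_def harm_nonneg)
  also have "\<dots> \<le> real (ex_P_K3 n P)"
    unfolding E0_def by (rule sum_harm_weight_conflict_le_ex_P_K3[OF P AB])
  finally have "real (card L) * (ln d / (64 * d)) \<le> real (ex_P_K3 n P)" .
  moreover have "(real n)\<^sup>2 / 32 * (ln d / (64 * d)) \<le> real (card L) * (ln d / (64 * d))"
    using card_low_degree_free_pairs_ge[OF P(1) n d sparse] d
    by (intro mult_right_mono) (simp_all add: L_def E0_def d_def)
  ultimately show ?thesis
    by (simp add: d_def)
qed

lemma constrained_sparse:
  assumes "constrained \<beta>1 \<beta>2 n P" and "0 \<le> \<beta>2"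
  shows "real (card P) * real (max_degree n P) \<le> (real n)\<^sup>2 / 4"
proof -
  have "(1 / 4 - \<beta>2) * (real n)\<^sup>2 \<le> (real n)\<^sup>2 / 4"
    using assms(2) by (simp add: algebra_simps)
  then show ?thesis
    using assms(1) unfolding constrained_def by linarith
qed

lemma ex_P_K3_upper_bound:
  assumes P: "graph_on n P" "triangle_free P" and "constrained \<beta>1 \<beta>2 n P"
  shows "real (ex_P_K3 n P) \<le> \<beta>1 / 2 * (real n)\<^sup>2 * ln (avg_degree n P) / avg_degree n P"
proof -
  have "2 * real (ex_P_K3 n P) \<le> real n * real (indep_number n P)"
    using twice_ex_P_K3_le[OF P] by (metis of_nat_le_iff of_nat_mult of_nat_numeral)
  also have "\<dots> \<le> real n * (\<beta>1 * real n * ln (avg_degree n P) / avg_degree n P)"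
    using assms(3) unfolding constrained_def by (intro mult_left_mono) auto
  also have "\<dots> = 2 * (\<beta>1 / 2 * (real n)\<^sup>2 * ln (avg_degree n P) / avg_degree n P)"
    by (simp add: power2_eq_square)
  finally show ?thesis
    by linarith
qed

theorem corollary1p2:
  fixes \<beta>1 \<beta>2 :: real
  assumes "\<beta>1 > 0" and "\<beta>2 > 0"
  shows "\<exists>c C :: real. c > 0 \<and> C > 0 \<and> (\<exists>n0 :: nat. \<forall>n \<ge> n0. \<forall>P.
           graph_on n P \<and> triangle_free P \<and> constrained \<beta>1 \<beta>2 n P \<longrightarrow>
             c * (real n)^2 * ln (avg_degree n P) / avg_degree n P \<le> real (ex_P_K3 n P) \<and>
             real (ex_P_K3 n P) \<le> C * (real n)^2 * ln (avg_degree n P) / avg_degree n P)"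
proof (rule exI[of _ "1 / 2048"], rule exI[of _ "\<beta>1 / 2"], intro conjI exI[of _ "2 :: nat"] allI impI)
  show "(0 :: real) < 1 / 2048" "0 < \<beta>1 / 2"
    using assms by simp_all
  fix n :: nat and P
  assume n: "2 \<le> n" and "graph_on n P \<and> triangle_free P \<and> constrained \<beta>1 \<beta>2 n P"
  then have P: "graph_on n P" "triangle_free P" and cons: "constrained \<beta>1 \<beta>2 n P"
    by simp_all
  have "1 < avg_degree n P"
    using cons by (simp add: constrained_def)
  with ex_P_K3_lower_bound[OF P n _ constrained_sparse[OF cons]] assms(2)
  show "1 / 2048 * (real n)^2 * ln (avg_degree n P) / avg_degree n P \<le> real (ex_P_K3 n P)"
    by simp
  show "real (ex_P_K3 n P) \<le> \<beta>1 / 2 * (real n)^2 * ln (avg_degree n P) / avg_degree n P"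
    using ex_P_K3_upper_bound[OF P cons] by (simp add: power2_eq_square)
qed

end
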